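(* Let $n\geq 1$. The map $\rho_1\mapsto x_1$, $\rho_2\mapsto x_nx_1$, $\rho_3\mapsto x_{n-1}x_nx_1$, $\dots$, $\rho_n\mapsto x_2x_3\cdots x_nx_1$ (i.e. $\rho_k\mapsto x_{n-k+2}x_{n-k+3}\cdots x_nx_1$) extends to a group isomorphism from the group $\langle\rho_1,\dots,\rho_n\mid\rho_1\rho_n\rho_i=\rho_{i+1}\rho_n,\ 1\leq i\leq n-1\rangle$ onto the group $$\langle x_1,\dots,x_n\mid x_1x_2\cdots x_nx_1=x_2x_3\cdots x_nx_1x_2=\cdots=x_nx_1x_2\cdots x_n\rangle$$ (where each word in the chain of equalities is the product of $n+1$ consecutive generators taken cyclically, starting at $x_1$, $x_2$, ..., $x_n$ respectively), with inverse given by $x_1\mapsto\rho_1$, $x_n\mapsto\rho_2\rho_1^{-1}$, $x_{n-1}\mapsto\rho_3\rho_2^{-1}$, $\dots$, $x_2\mapsto\rho_n\rho_{n-1}^{-1}$. *)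

theory Defs
  imports "HOL-Algebra.Algebra"
begin

text \<open>Group presentations. A word over generators of type 'a is a list of letters
(x, True) = x and (x, False) = x^-1.\<close>

type_synonym 'a word = "('a \<times> bool) list"

inductive pres_eq :: "('a word \<times> 'a word) set \<Rightarrow> 'a word \<Rightarrow> 'a word \<Rightarrow> bool"
  for R where
  refl: "pres_eq R w w"
| sym: "pres_eq R u v \<Longrightarrow> pres_eq R v u"
| trans: "pres_eq R u v \<Longrightarrow> pres_eq R v w \<Longrightarrow> pres_eq R u w"
| cong: "pres_eq R u u' \<Longrightarrow> pres_eq R v v' \<Longrightarrow> pres_eq R (u @ v) (u' @ v')"
| cancel: "pres_eq R [(x, b), (x, \<not> b)] []"
| rel: "(u, v) \<in> R \<Longrightarrow> pres_eq R u v"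

definition pres_class :: "('a word \<times> 'a word) set \<Rightarrow> 'a word \<Rightarrow> 'a word set" where
  "pres_class R w = {v. pres_eq R w v}"

definition presented_group :: "'a set \<Rightarrow> ('a word \<times> 'a word) set \<Rightarrow> 'a word set monoid" where
  "presented_group S R =
     \<lparr> carrier = {pres_class R w | w. fst ` set w \<subseteq> S},
       monoid.mult = (\<lambda>A B. \<Union>{pres_class R (u @ v) | u v. u \<in> A \<and> v \<in> B}),
       one = pres_class R [] \<rparr>"

definition pos_word :: "'a list \<Rightarrow> 'a word" where
  "pos_word xs = map (\<lambda>x. (x, True)) xs"

definition inv_word :: "'a word \<Rightarrow> 'a word" where
  "inv_word w = rev (map (\<lambda>(x, b). (x, \<not> b)) w)"

text \<open>Relations \<rho>_1 \<rho>_n \<rho>_i = \<rho>_{i+1} \<rho>_n, 1 \<le> i \<le> n-1 (generators \<rho>_k encoded by k).\<close>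
definition rho_rels :: "nat \<Rightarrow> (nat word \<times> nat word) set" where
  "rho_rels n = {(pos_word [1, n, i], pos_word [i + 1, n]) | i. 1 \<le> i \<and> i \<le> n - 1}"

text \<open>W_j = x_j x_{j+1} ... : product of n+1 consecutive generators cyclically from x_j.\<close>
definition cyc_word :: "nat \<Rightarrow> nat \<Rightarrow> nat word" where
  "cyc_word n j = pos_word (map (\<lambda>t. ((j - 1 + t) mod n) + 1) [0..<n + 1])"

text \<open>Relations W_1 = W_2 = ... = W_n (generators x_j encoded by j).\<close>
definition x_rels :: "nat \<Rightarrow> (nat word \<times> nat word) set" where
  "x_rels n = {(cyc_word n j, cyc_word n (j + 1)) | j. 1 \<le> j \<and> j \<le> n - 1}"

end

theory Submission
  imports Defs
begin

text \<open>On
generators they are mutually inverse already in the free group, so everything rests on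
checking the relations. For \<open>j \<ge> 2\<close> the image of \<open>x_j\<close> is
\<open>\<rho>_{n+2-j} \<rho>_{n+1-j}\<^sup>-\<^sup>1\<close>, so images of consecutive runs of generators telescope: the
cyclic word \<open>W_j = x_j \<cdots> x_n x_1 \<cdots> x_j\<close> goes to \<open>\<rho>_{i+1} \<rho>_n \<rho>_i\<^sup>-\<^sup>1\<close> with
\<open>i = n + 1 - j\<close>, which the relation \<open>\<rho>_1 \<rho>_n \<rho>_i = \<rho>_{i+1} \<rho>_n\<close> turns into
\<open>\<rho>_1 \<rho>_n\<close>, independently of \<open>j\<close>. Conversely, that relation is sent to
\<open>W_1 T = W_{n+1-i} T\<close>, where \<open>T\<close> is the image of \<open>\<rho>_i\<close>.\<close>

declare pres_eq.refl [iff] and pres_eq.trans [trans]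

lemma pos_word_Nil [simp]: "pos_word [] = []"
  and pos_word_Cons [simp]: "pos_word (x # xs) = (x, True) # pos_word xs"
  and pos_word_append [simp]: "pos_word (xs @ ys) = pos_word xs @ pos_word ys"
  and letters_pos_word [simp]: "fst ` set (pos_word xs) = set xs"
  by (auto simp: pos_word_def image_image)

lemma inv_word_Nil [simp]: "inv_word [] = []"
  and inv_word_Cons [simp]: "inv_word (a # w) = inv_word w @ [(fst a, \<not> snd a)]"
  and inv_word_append [simp]: "inv_word (u @ v) = inv_word v @ inv_word u"
  by (auto simp: inv_word_def split: prod.split)

lemma inv_word_inv_word [simp]: "inv_word (inv_word w) = w"
  by (induction w) auto

section \<open>Words modulo relations\<close>

lemma pres_eq_cong3:
  "pres_eq R a a' \<Longrightarrow> pres_eq R b b' \<Longrightarrow> pres_eq R c c' \<Longrightarrow> pres_eq R (a @ b @ c) (a' @ b' @ c')"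
  by (intro pres_eq.cong)

lemma pres_eq_infix: "pres_eq R u v \<Longrightarrow> pres_eq R (a @ u @ c) (a @ v @ c)"
  by (intro pres_eq_cong3 pres_eq.refl)

lemma pres_eq_cancel_right: "pres_eq R (w @ inv_word w) []"
proof (induction w)
  case (Cons a w)
  obtain x b where a: "a = (x, b)" by fastforce
  have "pres_eq R ([(x, b)] @ (w @ inv_word w) @ [(x, \<not> b)]) ([(x, b)] @ [] @ [(x, \<not> b)])"
    using Cons.IH by (rule pres_eq_infix)
  also have "pres_eq R \<dots> []"
    by (simp add: pres_eq.cancel)
  finally show ?case using a by simp
qed simp

lemma pres_eq_cancel_left: "pres_eq R (inv_word w @ w) []"
  using pres_eq_cancel_right[of R "inv_word w"] by simp

lemma pres_eq_cancel_letter: "pres_eq R (a @ [(x, b), (x, \<not> b)] @ c) (a @ c)"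
  using pres_eq_infix[OF pres_eq.cancel, of R a x b c] by simp

lemma pres_eq_cancel_infix: "pres_eq R (a @ w @ inv_word w @ c) (a @ c)"
  using pres_eq_infix[OF pres_eq_cancel_right, of R a w c] by simp

lemma pres_eq_cancel_inv_infix: "pres_eq R (a @ inv_word w @ w @ c) (a @ c)"
  using pres_eq_cancel_infix[of R a "inv_word w" c] by simp

lemma pres_eq_inv_word:
  assumes "pres_eq R u v"
  shows "pres_eq R (inv_word u) (inv_word v)"
proof -
  have "pres_eq R (inv_word u) (inv_word u @ v @ inv_word v @ [])"
    using pres_eq_cancel_infix[of R "inv_word u" v "[]"] by (simp add: pres_eq.sym)
  also have "pres_eq R \<dots> (inv_word u @ u @ inv_word v @ [])"
    using pres_eq_infix[OF pres_eq.sym[OF assms], of "inv_word u" "inv_word v @ []"] .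
  also have "pres_eq R \<dots> (inv_word v)"
    using pres_eq_cancel_inv_infix[of R "[]" u "inv_word v"] by simp
  finally show ?thesis .
qed

lemma pres_eq_telescope:
  assumes "m \<le> n"
  shows "pres_eq R (concat (map (\<lambda>k. a k @ inv_word (a (Suc k))) [m..<n])) (a m @ inv_word (a n))"
  using assms
proof (induction n rule: dec_induct)
  case base
  show ?case using pres_eq_cancel_right[of R "a m"] by (simp add: pres_eq.sym)
next
  case (step n)
  have "concat (map (\<lambda>k. a k @ inv_word (a (Suc k))) [m..<Suc n])
      = concat (map (\<lambda>k. a k @ inv_word (a (Suc k))) [m..<n]) @ a n @ inv_word (a (Suc n))"
    using step.hyps by simp
  also have "pres_eq R \<dots> ((a m @ inv_word (a n)) @ a n @ inv_word (a (Suc n)))"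
    using step.IH by (intro pres_eq.cong pres_eq.refl)
  also have "pres_eq R \<dots> (a m @ inv_word (a (Suc n)))"
    using pres_eq_cancel_inv_infix[of R "a m" "a n" "inv_word (a (Suc n))"] by simp
  finally show ?case .
qed

lemma pres_class_eq_iff: "pres_class R u = pres_class R v \<longleftrightarrow> pres_eq R u v"
proof
  assume "pres_class R u = pres_class R v"
  then show "pres_eq R u v"
    by (metis mem_Collect_eq pres_class_def pres_eq.refl)
next
  assume "pres_eq R u v"
  then show "pres_class R u = pres_class R v"
    unfolding pres_class_def by (auto intro: pres_eq.trans pres_eq.sym)
qed

lemma pres_class_mult:
  "pres_class R u \<otimes>\<^bsub>presented_group S R\<^esub> pres_class R v = pres_class R (u @ v)"
proof -
  have "pres_class R (u' @ v') = pres_class R (u @ v)"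
    if "u' \<in> pres_class R u" "v' \<in> pres_class R v" for u' v'
    using that unfolding pres_class_eq_iff by (simp add: pres_class_def pres_eq.cong pres_eq.sym)
  moreover have "u \<in> pres_class R u" "v \<in> pres_class R v"
    by (auto simp: pres_class_def)
  ultimately have "{pres_class R (u' @ v') | u' v'. u' \<in> pres_class R u \<and> v' \<in> pres_class R v}
      = {pres_class R (u @ v)}"
    by blast
  then show ?thesis by (simp add: presented_group_def)
qed

section \<open>Homomorphisms induced by substitution\<close>

definition subst_letter :: "('a \<Rightarrow> 'b word) \<Rightarrow> 'a \<times> bool \<Rightarrow> 'b word" where
  "subst_letter f a = (if snd a then f (fst a) else inv_word (f (fst a)))"

definition subst :: "('a \<Rightarrow> 'b word) \<Rightarrow> 'a word \<Rightarrow> 'b word" where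
  "subst f w = concat (map (subst_letter f) w)"

lemma subst_letter_simps [simp]:
  "subst_letter f (x, True) = f x" "subst_letter f (x, False) = inv_word (f x)"
  by (simp_all add: subst_letter_def)

lemma subst_Nil [simp]: "subst f [] = []"
  and subst_Cons [simp]: "subst f (a # w) = subst_letter f a @ subst f w"
  and subst_append [simp]: "subst f (u @ v) = subst f u @ subst f v"
  by (simp_all add: subst_def)

lemma subst_pos_word [simp]: "subst f (pos_word xs) = concat (map f xs)"
  by (induction xs) (auto simp: subst_letter_def)

lemma subst_inv_word: "subst f (inv_word w) = inv_word (subst f w)"
  by (induction w) (auto simp: subst_letter_def)

lemma subst_subst: "subst g (subst f w) = subst (\<lambda>x. subst g (f x)) w"
  by (induction w) (auto simp: subst_letter_def subst_inv_word)

lemma letters_subst: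
  assumes "fst ` set w \<subseteq> S" "\<forall>x\<in>S. fst ` set (f x) \<subseteq> T"
  shows "fst ` set (subst f w) \<subseteq> T"
  using assms
proof (induction w)
  case (Cons a w)
  have "fst ` set (inv_word u) = fst ` set u" for u :: "'b word"
    by (induction u) auto
  then have "fst ` set (subst_letter f a) = fst ` set (f (fst a))"
    by (simp add: subst_letter_def)
  moreover have "fst ` set (f (fst a)) \<subseteq> T"
    using Cons.prems by auto
  ultimately show ?case using Cons by (simp add: image_Un)
qed simp

definition respects_rels :: "('a word \<times> 'a word) set \<Rightarrow> ('b word \<times> 'b word) set \<Rightarrow> ('a \<Rightarrow> 'b word) \<Rightarrow> bool" where
  "respects_rels R R' f \<longleftrightarrow> (\<forall>(u, v) \<in> R. pres_eq R' (subst f u) (subst f v))"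

lemma pres_eq_subst:
  assumes "respects_rels R R' f" and "pres_eq R u v"
  shows "pres_eq R' (subst f u) (subst f v)"
  using assms(2)
proof (induction rule: pres_eq.induct)
  case (sym u v)
  then show ?case by (blast intro: pres_eq.sym)
next
  case (trans u v w)
  then show ?case by (blast intro: pres_eq.trans)
next
  case (cong u u' v v')
  then show ?case by (simp add: pres_eq.cong)
next
  case (cancel x b)
  then show ?case
    by (cases b) (simp_all add: subst_letter_def pres_eq_cancel_right pres_eq_cancel_left)
next
  case (rel u v)
  then show ?case using assms(1) by (auto simp: respects_rels_def)
qed simp

lemma pres_eq_subst_id:
  assumes "\<forall>x\<in>S. pres_eq R (f x) [(x, True)]" and "fst ` set w \<subseteq> S"
  shows "pres_eq R (subst f w) w"
  using assms(2)
proof (induction w)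
  case (Cons a w)
  obtain x b where a: "a = (x, b)" by fastforce
  with Cons.prems assms(1) have fx: "pres_eq R (f x) [(x, True)]" by auto
  have "pres_eq R (subst_letter f a) [a]"
    using fx pres_eq_inv_word[OF fx] a by (cases b) (auto simp: subst_letter_def)
  then show ?case using Cons pres_eq.cong[of R _ "[a]"] by simp
qed simp

text \<open>The choice of representative by \<open>SOME\<close> is harmless once \<open>f\<close> respects the relations
(see \<open>induced_map_class\<close>).\<close>
definition induced_map ::
    "('a word \<times> 'a word) set \<Rightarrow> ('b word \<times> 'b word) set \<Rightarrow> ('a \<Rightarrow> 'b word) \<Rightarrow> 'a word set \<Rightarrow> 'b word set" where
  "induced_map R R' f A = pres_class R' (subst f (SOME w. A = pres_class R w))"

lemma induced_map_class:
  assumes "respects_rels R R' f"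
  shows "induced_map R R' f (pres_class R w) = pres_class R' (subst f w)"
proof -
  have "pres_class R w = pres_class R (SOME w'. pres_class R w = pres_class R w')"
    by (rule someI_ex) blast
  then have "pres_eq R w (SOME w'. pres_class R w = pres_class R w')"
    by (simp add: pres_class_eq_iff)
  then show ?thesis
    unfolding induced_map_def pres_class_eq_iff by (rule pres_eq.sym[OF pres_eq_subst[OF assms]])
qed

lemma carrier_presented_group_E:
  assumes "A \<in> carrier (presented_group S R)"
  obtains w where "A = pres_class R w" "fst ` set w \<subseteq> S"
  using assms by (auto simp: presented_group_def)

lemma induced_map_hom:
  assumes "respects_rels R R' f" and "\<forall>x\<in>S. fst ` set (f x) \<subseteq> S'"
  shows "induced_map R R' f \<in> hom (presented_group S R) (presented_group S' R')"
proof (rule homI)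
  fix A assume "A \<in> carrier (presented_group S R)"
  then obtain w where w: "A = pres_class R w" "fst ` set w \<subseteq> S"
    by (rule carrier_presented_group_E)
  have "fst ` set (subst f w) \<subseteq> S'"
    using w(2) assms(2) by (rule letters_subst)
  then show "induced_map R R' f A \<in> carrier (presented_group S' R')"
    unfolding w(1) induced_map_class[OF assms(1)] by (simp add: presented_group_def) blast
next
  fix A B assume "A \<in> carrier (presented_group S R)" "B \<in> carrier (presented_group S R)"
  then obtain u v where "A = pres_class R u" "B = pres_class R v"
    by (elim carrier_presented_group_E)
  then show "induced_map R R' f (A \<otimes>\<^bsub>presented_group S R\<^esub> B)
      = induced_map R R' f A \<otimes>\<^bsub>presented_group S' R'\<^esub> induced_map R R' f B"
    by (simp only: pres_class_mult induced_map_class[OF assms(1)] subst_append)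
qed

lemma induced_map_inverse:
  assumes "respects_rels R R' f" "respects_rels R' R g"
    and "\<forall>x\<in>S. pres_eq R (subst g (f x)) [(x, True)]"
    and "A \<in> carrier (presented_group S R)"
  shows "induced_map R' R g (induced_map R R' f A) = A"
proof -
  obtain w where w: "A = pres_class R w" "fst ` set w \<subseteq> S"
    using assms(4) by (rule carrier_presented_group_E)
  have "pres_eq R (subst (\<lambda>x. subst g (f x)) w) w"
    using pres_eq_subst_id[OF assms(3) w(2)] .
  then show ?thesis
    unfolding w(1) induced_map_class[OF assms(1)] induced_map_class[OF assms(2)] subst_subst
    by (simp only: pres_class_eq_iff)
qed

lemma induced_group_isomorphisms:
  assumes "respects_rels R R' f" "respects_rels R' R g"
    and "\<forall>x\<in>S. fst ` set (f x) \<subseteq> S'" "\<forall>y\<in>S'. fst ` set (g y) \<subseteq> S"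
    and "\<forall>x\<in>S. pres_eq R (subst g (f x)) [(x, True)]"
    and "\<forall>y\<in>S'. pres_eq R' (subst f (g y)) [(y, True)]"
  shows "group_isomorphisms (presented_group S R) (presented_group S' R')
           (induced_map R R' f) (induced_map R' R g)"
  unfolding group_isomorphisms_def
  using induced_map_hom[OF assms(1,3)] induced_map_hom[OF assms(2,4)]
    induced_map_inverse[OF assms(1,2,5)] induced_map_inverse[OF assms(2,1,6)]
  by blast

section \<open>The two presentations\<close>

declare upt_Suc [simp del]

definition rho_to_x :: "nat \<Rightarrow> nat \<Rightarrow> nat word" where
  "rho_to_x n k = pos_word ([n + 2 - k..<n + 1] @ [1])"

definition x_to_rho :: "nat \<Rightarrow> nat \<Rightarrow> nat word" where
  "x_to_rho n j =
     (if j = 1 then pos_word [1] else pos_word [n + 2 - j] @ inv_word (pos_word [n + 1 - j]))"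

lemma letters_rho_to_x: "\<forall>k\<in>{1..n}. fst ` set (rho_to_x n k) \<subseteq> {1..n}"
  by (auto simp: rho_to_x_def)

lemma letters_x_to_rho: "\<forall>j\<in>{1..n}. fst ` set (x_to_rho n j) \<subseteq> {1..n}"
  by (auto simp: x_to_rho_def)

text \<open>With \<open>a_k = \<rho>_{n+1-k}\<close> the image of \<open>x_{k+1}\<close> is \<open>a_k a_{k+1}\<^sup>-\<^sup>1\<close>, so the image of
\<open>x_p \<cdots> x_{q-1}\<close> telescopes to \<open>a_{p-1} a_{q-1}\<^sup>-\<^sup>1\<close>.\<close>
lemma x_to_rho_segment_telescopes:
  assumes "2 \<le> p" "p \<le> q"
  shows "pres_eq R (concat (map (x_to_rho n) [p..<q])) [(n + 2 - p, True), (n + 2 - q, False)]"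
proof -
  let ?a = "\<lambda>k. pos_word [n + 1 - k]"
  have "[p..<q] = map Suc [p - 1..<q - 1]"
    using assms by (simp add: map_Suc_upt)
  then have "map (x_to_rho n) [p..<q] = map (\<lambda>k. ?a k @ inv_word (?a (Suc k))) [p - 1..<q - 1]"
    using assms by (auto simp: x_to_rho_def)
  then have "concat (map (x_to_rho n) [p..<q])
      = concat (map (\<lambda>k. ?a k @ inv_word (?a (Suc k))) [p - 1..<q - 1])"
    by simp
  also have "pres_eq R \<dots> (?a (p - 1) @ inv_word (?a (q - 1)))"
    using assms by (intro pres_eq_telescope) simp
  finally show ?thesis
    using assms by (simp add: Suc_diff_le)
qed

lemma cyc_word_split:
  assumes "1 \<le> j" "j \<le> n"
  shows "cyc_word n j = pos_word ([j..<n + 1] @ [1] @ [2..<j + 1])"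
proof -
  have "map (\<lambda>t. (j - 1 + t) mod n + 1) [0..<n + 1] = [j..<n + 1] @ [1..<j + 1]"
  proof (rule nth_equalityI)
    fix t assume "t < length (map (\<lambda>t. (j - 1 + t) mod n + 1) [0..<n + 1])"
    then have t: "t < n + 1" by simp
    show "map (\<lambda>t. (j - 1 + t) mod n + 1) [0..<n + 1] ! t = ([j..<n + 1] @ [1..<j + 1]) ! t"
    proof (cases "t < n + 1 - j")
      case True
      then have "j - 1 + t < n" using assms by simp
      then show ?thesis using True t assms by (simp add: nth_append)
    next
      case False
      then have "n \<le> j - 1 + t" "j - 1 + t - n < n" using assms t by simp_all
      then have "(j - 1 + t) mod n = j - 1 + t - n" by (simp add: le_mod_geq)
      then show ?thesis using False t assms by (simp add: nth_append)
    qed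
  qed (use assms in simp)
  moreover have "[1..<j + 1] = 1 # [2..<j + 1]"
    using assms by (simp add: upt_conv_Cons numeral_2_eq_2)
  ultimately show ?thesis by (simp add: cyc_word_def)
qed

lemma cyc_word_pres_eq_first:
  assumes "1 \<le> j" "j \<le> n"
  shows "pres_eq (x_rels n) (cyc_word n j) (cyc_word n 1)"
  using assms
proof (induction j rule: dec_induct)
  case (step j)
  then have "(cyc_word n j, cyc_word n (Suc j)) \<in> x_rels n"
    unfolding x_rels_def by force
  then have "pres_eq (x_rels n) (cyc_word n (Suc j)) (cyc_word n j)"
    by (rule pres_eq.sym[OF pres_eq.rel])
  also have "pres_eq (x_rels n) \<dots> (cyc_word n 1)"
    using step by simp
  finally show ?case .
qed simp

lemma rho_to_x_respects_rels: "respects_rels (rho_rels n) (x_rels n) (rho_to_x n)"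
  unfolding respects_rels_def
proof clarify
  fix u v assume "(u, v) \<in> rho_rels n"
  then obtain i where uv: "u = pos_word [1, n, i]" "v = pos_word [i + 1, n]" and i: "1 \<le> i" "i \<le> n - 1"
    unfolding rho_rels_def by blast
  define T where "T = rho_to_x n i"
  have "[1..<n + 1] = 1 # [2..<n + 1]"
    using i by (simp add: upt_conv_Cons numeral_2_eq_2)
  then have "subst (rho_to_x n) u = cyc_word n 1 @ T"
    using i cyc_word_split[of 1 n] by (simp add: uv rho_to_x_def T_def)
  also have "pres_eq (x_rels n) \<dots> (cyc_word n (n + 1 - i) @ T)"
    using i pres_eq.sym[OF cyc_word_pres_eq_first, of "n + 1 - i" n] by (simp add: pres_eq.cong)
  also have "\<dots> = subst (rho_to_x n) v"
  proof -
    have "[2..<n + 2 - i] @ [n + 2 - i..<n + 1] = [2..<n + 1]"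
      using upt_add_eq_append[of 2 "n + 2 - i" "i - 1"] i by simp
    then have "pos_word [2..<n + 2 - i] @ pos_word [n + 2 - i..<n + 1] = pos_word [2..<n + 1]"
      by (metis pos_word_append)
    then show ?thesis
      using i cyc_word_split[of "n + 1 - i" n] by (simp add: uv rho_to_x_def T_def Suc_diff_le numeral_2_eq_2)
  qed
  finally show "pres_eq (x_rels n) (subst (rho_to_x n) u) (subst (rho_to_x n) v)" .
qed

lemma rho_rels_conj:
  assumes "1 \<le> i" "i \<le> n - 1"
  shows "pres_eq (rho_rels n) [(i + 1, True), (n, True), (i, False)] [(1, True), (n, True)]"
proof -
  have "(pos_word [1, n, i], pos_word [i + 1, n]) \<in> rho_rels n"
    using assms unfolding rho_rels_def by blast
  then have "pres_eq (rho_rels n) [(i + 1, True), (n, True)] [(1, True), (n, True), (i, True)]"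
    by (simp add: pres_eq.rel pres_eq.sym)
  then have "pres_eq (rho_rels n) ([(i + 1, True), (n, True)] @ [(i, False)])
      ([(1, True), (n, True), (i, True)] @ [(i, False)])"
    by (rule pres_eq.cong) (rule pres_eq.refl)
  also have "\<dots> = [(1, True), (n, True)] @ [(i, True), (i, False)] @ []"
    by simp
  also have "pres_eq (rho_rels n) \<dots> [(1, True), (n, True)]"
    using pres_eq_cancel_letter[of "rho_rels n" "[(1, True), (n, True)]" i True "[]"] by simp
  finally show ?thesis by simp
qed

lemma subst_x_to_rho_cyc_word:
  assumes "1 \<le> j" "j \<le> n"
  shows "pres_eq (rho_rels n) (subst (x_to_rho n) (cyc_word n j)) [(1, True), (n, True)]"
proof (cases "j = 1")
  case True
  have "[1..<n + 1] = 1 # [2..<n + 1]"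
    using assms by (simp add: upt_conv_Cons numeral_2_eq_2)
  then have "subst (x_to_rho n) (cyc_word n j)
      = [(1, True)] @ concat (map (x_to_rho n) [2..<n + 1]) @ [(1, True)]"
    using True cyc_word_split[OF assms] by (simp add: x_to_rho_def)
  also have "pres_eq (rho_rels n) \<dots> ([(1, True)] @ [(n, True), (1, False)] @ [(1, True)])"
    using assms x_to_rho_segment_telescopes[of 2 "n + 1" "rho_rels n" n] by (intro pres_eq_infix) simp
  also have "pres_eq (rho_rels n) \<dots> [(1, True), (n, True)]"
    using pres_eq_cancel_letter[of "rho_rels n" "[(1, True), (n, True)]" 1 False "[]"] by simp
  finally show ?thesis .
next
  case False
  define i where "i = n + 1 - j"
  have i: "1 \<le> i" "i \<le> n - 1" "n + 2 - j = i + 1" "n + 1 - j = i"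
    using assms False by (auto simp: i_def)
  have "subst (x_to_rho n) (cyc_word n j)
      = concat (map (x_to_rho n) [j..<n + 1]) @ [(1, True)] @ concat (map (x_to_rho n) [2..<j + 1])"
    using cyc_word_split[OF assms] by (simp add: x_to_rho_def)
  also have "pres_eq (rho_rels n) \<dots> ([(i + 1, True), (1, False)] @ [(1, True)] @ [(n, True), (i, False)])"
    using x_to_rho_segment_telescopes[of j "n + 1" "rho_rels n" n]
      x_to_rho_segment_telescopes[of 2 "j + 1" "rho_rels n" n]
      assms False i by (intro pres_eq_cong3) auto
  also have "pres_eq (rho_rels n) \<dots> ([(i + 1, True), (n, True)] @ [(i, False)])"
    using pres_eq_cancel_letter[of "rho_rels n" "[(i + 1, True)]" 1 False] by simp
  also have "pres_eq (rho_rels n) \<dots> [(1, True), (n, True)]"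
    using rho_rels_conj[OF i(1,2)] by simp
  finally show ?thesis .
qed

lemma x_to_rho_respects_rels: "respects_rels (x_rels n) (rho_rels n) (x_to_rho n)"
  unfolding respects_rels_def
proof clarify
  fix u v assume "(u, v) \<in> x_rels n"
  then obtain j where uv: "u = cyc_word n j" "v = cyc_word n (j + 1)" and j: "1 \<le> j" "j \<le> n - 1"
    unfolding x_rels_def by blast
  have "pres_eq (rho_rels n) (subst (x_to_rho n) u) [(1, True), (n, True)]"
    using subst_x_to_rho_cyc_word[of j n] uv j by simp
  also have "pres_eq (rho_rels n) \<dots> (subst (x_to_rho n) v)"
    using subst_x_to_rho_cyc_word[of "j + 1" n] uv j by (simp add: pres_eq.sym)
  finally show "pres_eq (rho_rels n) (subst (x_to_rho n) u) (subst (x_to_rho n) v)" .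
qed

lemma subst_x_to_rho_rho_to_x:
  assumes "1 \<le> k" "k \<le> n"
  shows "pres_eq R (subst (x_to_rho n) (rho_to_x n k)) [(k, True)]"
proof -
  have "subst (x_to_rho n) (rho_to_x n k) = concat (map (x_to_rho n) [n + 2 - k..<n + 1]) @ [(1, True)]"
    by (simp add: rho_to_x_def x_to_rho_def)
  also have "pres_eq R \<dots> ([(k, True), (1, False)] @ [(1, True)])"
    using assms x_to_rho_segment_telescopes[of "n + 2 - k" "n + 1" R n] by (intro pres_eq.cong) simp_all
  also have "pres_eq R \<dots> [(k, True)]"
    using pres_eq_cancel_letter[of R "[(k, True)]" 1 False "[]"] by simp
  finally show ?thesis .
qed

lemma subst_rho_to_x_x_to_rho:
  assumes "1 \<le> j" "j \<le> n"
  shows "pres_eq R (subst (rho_to_x n) (x_to_rho n j)) [(j, True)]"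
proof (cases "j = 1")
  case False
  define U where "U = pos_word ([j + 1..<n + 1] @ [1])"
  have "[j..<n + 1] = j # [j + 1..<n + 1]"
    using assms by (simp add: upt_conv_Cons)
  then have "subst (rho_to_x n) (x_to_rho n j) = [(j, True)] @ U @ inv_word U @ []"
    using assms False by (simp add: x_to_rho_def rho_to_x_def U_def)
  also have "pres_eq R \<dots> [(j, True)]"
    using pres_eq_cancel_infix[of R "[(j, True)]" U "[]"] by simp
  finally show ?thesis .
qed (simp add: x_to_rho_def rho_to_x_def)

theorem proposition4p18:
  fixes n :: nat
  assumes "n \<ge> 1"
  shows "\<exists>\<phi> \<psi>.
    \<phi> \<in> iso (presented_group {1..n} (rho_rels n)) (presented_group {1..n} (x_rels n)) \<and>
    (\<forall>k \<in> {1..n}. \<phi> (pres_class (rho_rels n) (pos_word [k])) =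
        pres_class (x_rels n) (pos_word ([n + 2 - k..<n + 1] @ [1]))) \<and>
    \<psi> \<in> hom (presented_group {1..n} (x_rels n)) (presented_group {1..n} (rho_rels n)) \<and>
    (\<forall>g \<in> carrier (presented_group {1..n} (rho_rels n)). \<psi> (\<phi> g) = g) \<and>
    (\<forall>h \<in> carrier (presented_group {1..n} (x_rels n)). \<phi> (\<psi> h) = h) \<and>
    \<psi> (pres_class (x_rels n) (pos_word [1])) = pres_class (rho_rels n) (pos_word [1]) \<and>
    (\<forall>j \<in> {2..n}. \<psi> (pres_class (x_rels n) (pos_word [j])) =
        pres_class (rho_rels n) (pos_word [n + 2 - j] @ inv_word (pos_word [n + 1 - j])))"
proof -
  let ?G = "presented_group {1..n} (rho_rels n)"
  let ?H = "presented_group {1..n} (x_rels n)"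
  define \<phi> where "\<phi> = induced_map (rho_rels n) (x_rels n) (rho_to_x n)"
  define \<psi> where "\<psi> = induced_map (x_rels n) (rho_rels n) (x_to_rho n)"
  have \<psi>_gen: "\<psi> (pres_class (x_rels n) (pos_word [j])) = pres_class (rho_rels n) (x_to_rho n j)" for j
    by (simp add: \<psi>_def induced_map_class[OF x_to_rho_respects_rels])
  have "group_isomorphisms ?G ?H \<phi> \<psi>"
    unfolding \<phi>_def \<psi>_def
    by (rule induced_group_isomorphisms[OF rho_to_x_respects_rels x_to_rho_respects_rels
          letters_rho_to_x letters_x_to_rho])
      (simp_all add: subst_x_to_rho_rho_to_x subst_rho_to_x_x_to_rho)
  moreover from this have "\<phi> \<in> iso ?G ?H"
    by (rule group_isomorphisms_imp_iso)
  moreover have "\<forall>k \<in> {1..n}. \<phi> (pres_class (rho_rels n) (pos_word [k])) =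
      pres_class (x_rels n) (pos_word ([n + 2 - k..<n + 1] @ [1]))"
    by (simp add: \<phi>_def induced_map_class[OF rho_to_x_respects_rels] rho_to_x_def)
  moreover have "\<psi> (pres_class (x_rels n) (pos_word [1])) = pres_class (rho_rels n) (pos_word [1])"
    using \<psi>_gen[of 1] by (simp add: x_to_rho_def)
  moreover have "\<forall>j \<in> {2..n}. \<psi> (pres_class (x_rels n) (pos_word [j])) =
      pres_class (rho_rels n) (pos_word [n + 2 - j] @ inv_word (pos_word [n + 1 - j]))"
    by (simp only: \<psi>_gen) (simp add: x_to_rho_def)
  ultimately show ?thesis
    unfolding group_isomorphisms_def by blast
qed

end
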